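(* Let $X$ be a compact, complete, separable metric space and let $\mathcal{P}(X)$ be the space of Borel probability measures on $X$ with the topology of weak convergence. Let $J:\mathcal{P}(X)\to\mathbb{R}$ be continuously differentiable in the sense that for every $\mu\in\mathcal{P}(X)$ an influence function $\Psi_\mu$ of $J$ at $\mu$ exists and the map $(\mu,\nu)\mapsto \mathbb{E}_{x\sim\nu}[\Psi_\mu(x)]$ is continuous. Let $\theta\mapsto\mu_\theta\in\mathcal{P}(X)$ (with $\theta$ in a Euclidean space) be differentiable in the sense that $\frac{1}{\|h\|}(\mu_{\theta+h}-\mu_\theta)$ converges to a weak limit as $h\to 0$. Then \[ \nabla_\theta J(\mu_\theta)=\nabla_\theta\, \mathbb{E}_{x\sim\mu_\theta}[\hat\Psi(x)], \] where $\hat\Psi=\Psi_{\mu_\theta}$ is treated as a fixed function $X\to\mathbb{R}$ not depending on $\theta$ (i.e. the gradient on the right acts only through $\mu_\theta$).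
   Context: For $J:\mathcal{P}(X)\to\mathbb{R}$ and $\mu\in\mathcal{P}(X)$, the Gâteaux differential in direction $\chi=\nu-\mu$ ($\nu\in\mathcal{P}(X)$) is $dJ_\mu(\chi)=\lim_{\epsilon\to0^+}\frac{J(\mu+\epsilon\chi)-J(\mu)}{\epsilon}$. A function $\Psi_\mu:X\to\mathbb{R}$ is an influence function for $J$ at $\mu$ if $dJ_\mu(\chi)=\int_X\Psi_\mu(x)\,\chi(dx)$ for all $\chi=\nu-\mu$ with $\nu\in\mathcal{P}(X)$. *)

theory Defs
  imports "HOL-Probability.Probability"
begin

definition prob_measures :: "'a::metric_space measure set" where
  "prob_measures = {M. sets M = sets (borel :: 'a measure) \<and> prob_space M}"

definition weak_topology :: "'a::metric_space measure topology" where
  "weak_topology = topology_generated_by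
     {{M \<in> prob_measures. (\<integral>x. f x \<partial>M) \<in> U} | (f :: 'a \<Rightarrow> real) U.
        continuous_on UNIV f \<and> bounded (range f) \<and> open U}"

text \<open>The mixture mu + eps (nu - mu) = (1 - eps) mu + eps nu.\<close>
definition mix :: "real \<Rightarrow> 'a measure \<Rightarrow> 'a measure \<Rightarrow> 'a measure" where
  "mix e \<mu> \<nu> = measure_of (space \<mu>) (sets \<mu>)
      (\<lambda>A. ennreal (1 - e) * emeasure \<mu> A + ennreal e * emeasure \<nu> A)"

text \<open>Psi is an influence function of J at mu: for every nu in P(X) the Gateaux differential
  in direction chi = nu - mu exists and equals the integral of Psi against chi.\<close>
definition influence_function ::
    "('a::metric_space measure \<Rightarrow> real) \<Rightarrow> 'a measure \<Rightarrow> ('a \<Rightarrow> real) \<Rightarrow> bool" where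
  "influence_function J \<mu> \<Psi> \<longleftrightarrow>
     (\<forall>\<nu> \<in> prob_measures. integrable \<nu> \<Psi> \<and> integrable \<mu> \<Psi> \<and>
        ((\<lambda>e. (J (mix e \<mu> \<nu>) - J \<mu>) / e) \<longlongrightarrow>
           ((\<integral>x. \<Psi> x \<partial>\<nu>) - (\<integral>x. \<Psi> x \<partial>\<mu>))) (at_right 0))"

text \<open>theta \<mapsto> mu theta is (weakly) differentiable at theta: there is a linear map
  h \<mapsto> sum_b (h\<bullet>b) lambda_b into finite signed Borel measures (lambda_b = P b - N b) such that
  (mu(theta+h) - mu theta - L h) / norm h tends weakly to 0 as h \<rightarrow> 0.\<close>
definition weakly_differentiable_at ::
    "('b::euclidean_space \<Rightarrow> 'a::metric_space measure) \<Rightarrow> 'b \<Rightarrow> bool" where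
  "weakly_differentiable_at \<mu> \<theta> \<longleftrightarrow>
     (\<exists>P N :: 'b \<Rightarrow> 'a measure.
        (\<forall>b\<in>Basis. finite_measure (P b) \<and> sets (P b) = sets borel \<and>
                    finite_measure (N b) \<and> sets (N b) = sets borel) \<and>
        (\<forall>f :: 'a \<Rightarrow> real. continuous_on UNIV f \<and> bounded (range f) \<longrightarrow>
           ((\<lambda>h. ((\<integral>x. f x \<partial>\<mu> (\<theta> + h)) - (\<integral>x. f x \<partial>\<mu> \<theta>)
                   - (\<Sum>b\<in>Basis. (h \<bullet> b) * ((\<integral>x. f x \<partial>P b) - (\<integral>x. f x \<partial>N b)))) / norm h)
             \<longlongrightarrow> 0) (at 0)))"

end

theory Submission
  imports Defs
begin

text \<open>
  Along the segment e \<mapsto> mix e M N the influence function at mix e M N is the derivative of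
  J, so by the mean value theorem J N - J M is the integral of \<Psi> K against N - M for some
  mixture K of M and N.  Take M = \<mu> \<theta> and N = \<mu> (\<theta> + h); then K tends weakly to \<mu> \<theta> as
  h \<rightarrow> 0.  Evaluating the continuous map (M, N) \<mapsto> \<integral>\<Psi> M dN at Dirac measures shows that
  (M, x) \<mapsto> \<Psi> M x is jointly continuous, so by compactness of X, \<Psi> K tends to \<Psi> (\<mu> \<theta>)
  uniformly.  The uniform boundedness principle on the Banach space of bounded continuous
  functions bounds the difference quotients (\<mu> (\<theta> + h) - \<mu> \<theta>) / |h|, as functionals,
  along any sequence h \<rightarrow> 0.  Hence J (\<mu> (\<theta> + h)) - J (\<mu> \<theta>) and the integral of
  \<Psi> (\<mu> \<theta>) against \<mu> (\<theta> + h) - \<mu> \<theta> differ by o(|h|).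
\<close>

section \<open>Mixtures of probability measures\<close>

lemma prob_measuresD:
  assumes "M \<in> prob_measures"
  shows "sets M = sets borel" "space M = UNIV" "prob_space M"
  using assms unfolding prob_measures_def by (auto dest: sets_eq_imp_space_eq)

lemma prob_measures_finite_measure:
  "M \<in> prob_measures \<Longrightarrow> finite_measure M \<and> sets M = sets borel"
  unfolding prob_measures_def by (simp add: prob_space_def)

lemma integral_bounded_finite_measure:
  fixes f :: "'a::metric_space \<Rightarrow> real"
  assumes K: "finite_measure K" "sets K = sets borel"
    and f: "f \<in> borel_measurable borel" and B: "\<And>x. \<bar>f x\<bar> \<le> B"
  shows "integrable K f" "\<bar>\<integral>x. f x \<partial>K\<bar> \<le> B * measure K UNIV"
proof -
  interpret finite_measure K by (rule K(1))
  have "f \<in> borel_measurable K" using f K(2) measurable_cong_sets by blast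
  then show int: "integrable K f"
    using B by (intro integrable_const_bound[where B=B]) auto
  have "\<bar>\<integral>x. f x \<partial>K\<bar> \<le> (\<integral>x. \<bar>f x\<bar> \<partial>K)"
    using integral_norm_bound[of K f] by simp
  also have "\<dots> \<le> (\<integral>x. B \<partial>K)"
    using int B by (intro integral_mono) auto
  also have "\<dots> = B * measure K UNIV"
    using sets_eq_imp_space_eq[OF K(2)] by (simp add: mult.commute)
  finally show "\<bar>\<integral>x. f x \<partial>K\<bar> \<le> B * measure K UNIV" .
qed

lemma prob_measures_eqI:
  assumes "M \<in> prob_measures" "N \<in> prob_measures"
    and "\<And>A. A \<in> sets borel \<Longrightarrow> measure M A = measure N A"
  shows "M = N"
proof (rule measure_eqI)
  interpret M: prob_space M using prob_measuresD(3)[OF assms(1)] .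
  interpret N: prob_space N using prob_measuresD(3)[OF assms(2)] .
  show "sets M = sets N" using assms(1,2) by (simp add: prob_measuresD)
  show "emeasure M A = emeasure N A" if "A \<in> sets M" for A
    using that assms(3) prob_measuresD(1)[OF assms(1)]
    by (simp add: M.emeasure_eq_measure N.emeasure_eq_measure)
qed

lemma sets_mix: "sets M = sets borel \<Longrightarrow> sets (mix e M N) = sets borel"
  unfolding mix_def using sets.sigma_sets_eq[of "borel :: 'a::topological_space measure"]
  by (simp add: sets_eq_imp_space_eq)

lemma emeasure_mix:
  assumes M: "M \<in> prob_measures" and N: "N \<in> prob_measures" and A: "A \<in> sets borel"
  shows "emeasure (mix e M N) A = ennreal (1 - e) * emeasure M A + ennreal e * emeasure N A"
  unfolding mix_def
proof (rule emeasure_measure_of_sigma)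
  have sets_MN: "sets M = sets borel" "sets N = sets borel"
    using M N by (simp_all add: prob_measuresD)
  show "sigma_algebra (space M) (sets M)" by (rule sets.sigma_algebra_axioms)
  show "A \<in> sets M" using A sets_MN by simp
  show "positive (sets M) (\<lambda>A. ennreal (1 - e) * emeasure M A + ennreal e * emeasure N A)"
    by (simp add: positive_def)
  show "countably_additive (sets M) (\<lambda>A. ennreal (1 - e) * emeasure M A + ennreal e * emeasure N A)"
  proof (rule countably_additiveI)
    fix F :: "nat \<Rightarrow> 'a set"
    assume F: "range F \<subseteq> sets M" "disjoint_family F"
    then have "range F \<subseteq> sets N" using sets_MN by simp
    then show "(\<Sum>i. ennreal (1 - e) * emeasure M (F i) + ennreal e * emeasure N (F i))
        = ennreal (1 - e) * emeasure M (\<Union>i. F i) + ennreal e * emeasure N (\<Union>i. F i)"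
      using suminf_emeasure[OF F] suminf_emeasure[OF _ F(2)]
      by (simp add: suminf_add[symmetric] ennreal_suminf_cmult)
  qed
qed

lemma measure_mix:
  assumes M: "M \<in> prob_measures" and N: "N \<in> prob_measures" and e: "0 \<le> e" "e \<le> 1"
    and A: "A \<in> sets borel"
  shows "measure (mix e M N) A = (1 - e) * measure M A + e * measure N A"
proof -
  interpret M: prob_space M using prob_measuresD(3)[OF M] .
  interpret N: prob_space N using prob_measuresD(3)[OF N] .
  have "emeasure (mix e M N) A = ennreal ((1 - e) * measure M A + e * measure N A)"
    using emeasure_mix[OF M N A] e
    by (simp add: M.emeasure_eq_measure N.emeasure_eq_measure ennreal_mult ennreal_plus)
  then show ?thesis
    using e by (intro measure_eq_emeasure_eq_ennreal) auto
qed

lemma mix_in_prob_measures: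
  assumes M: "M \<in> prob_measures" and N: "N \<in> prob_measures" and e: "0 \<le> e" "e \<le> 1"
  shows "mix e M N \<in> prob_measures"
proof -
  have sets_eq: "sets (mix e M N) = sets borel"
    using M by (simp add: sets_mix prob_measuresD)
  have "emeasure M UNIV = 1" "emeasure N UNIV = 1"
    using prob_space.emeasure_space_1 prob_measuresD[OF M] prob_measuresD[OF N] by metis+
  then have "emeasure (mix e M N) UNIV = 1"
    using emeasure_mix[OF M N, of UNIV] e by (simp add: ennreal_plus[symmetric] del: ennreal_plus)
  then show ?thesis
    unfolding prob_measures_def using sets_eq sets_eq_imp_space_eq[OF sets_eq]
    by (auto intro: prob_spaceI)
qed

lemma mix_swap:
  assumes "M \<in> prob_measures" "N \<in> prob_measures"
  shows "mix e M N = mix (1 - e) N M"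
  using assms unfolding mix_def by (simp add: prob_measuresD add.commute)

lemma mix_0: "M \<in> prob_measures \<Longrightarrow> N \<in> prob_measures \<Longrightarrow> mix 0 M N = M"
  by (rule prob_measures_eqI) (auto simp: measure_mix mix_in_prob_measures)

lemma mix_1: "M \<in> prob_measures \<Longrightarrow> N \<in> prob_measures \<Longrightarrow> mix 1 M N = N"
  using mix_swap[of M N 1] mix_0[of N M] by simp

lemma mix_mix:
  assumes M: "M \<in> prob_measures" and N: "N \<in> prob_measures"
    and e: "0 \<le> e" "e \<le> 1" and s: "0 \<le> s" "s \<le> 1"
  shows "mix s (mix e M N) N = mix (e + s * (1 - e)) M N"
proof -
  have "0 \<le> s * (1 - e)" "s * (1 - e) \<le> 1 - e"
    using e s by (simp_all add: mult_left_le_one_le)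
  then have es: "0 \<le> e + s * (1 - e)" "e + s * (1 - e) \<le> 1"
    using e by linarith+
  have K: "mix e M N \<in> prob_measures" using mix_in_prob_measures[OF M N e] .
  show ?thesis
    using M N K e s es
    by (intro prob_measures_eqI mix_in_prob_measures) (simp_all add: measure_mix algebra_simps)
qed

lemma nn_integral_mix:
  assumes M: "M \<in> prob_measures" and N: "N \<in> prob_measures"
    and u: "u \<in> borel_measurable borel"
  shows "(\<integral>\<^sup>+x. u x \<partial>mix e M N) = ennreal (1 - e) * (\<integral>\<^sup>+x. u x \<partial>M) + ennreal e * (\<integral>\<^sup>+x. u x \<partial>N)"
proof -
  have sets_MN: "sets M = sets borel" "sets N = sets borel" "sets (mix e M N) = sets borel"
    using M N by (simp_all add: prob_measuresD sets_mix)
  show ?thesis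
    using u
  proof (induction rule: borel_measurable_induct)
    case (cong f g)
    have "(\<integral>\<^sup>+x. f x \<partial>K) = (\<integral>\<^sup>+x. g x \<partial>K)" if "sets K = sets borel" for K
      using cong(3) sets_eq_imp_space_eq[OF that] by (intro nn_integral_cong) auto
    then show ?case using cong(4) sets_MN by metis
  next
    case (set A)
    then show ?case using emeasure_mix[OF M N set] sets_MN by simp
  next
    case (mult u c)
    have "(\<integral>\<^sup>+x. c * u x \<partial>K) = c * (\<integral>\<^sup>+x. u x \<partial>K)" if "sets K = sets borel" for K
      using mult(2) measurable_cong_sets[OF that refl] by (intro nn_integral_cmult) auto
    then show ?case using mult(4) sets_MN by (simp add: algebra_simps)
  next
    case (add u v)
    have "(\<integral>\<^sup>+x. v x + u x \<partial>K) = (\<integral>\<^sup>+x. v x \<partial>K) + (\<integral>\<^sup>+x. u x \<partial>K)" if "sets K = sets borel" for K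
      using add(1,3) by (simp add: nn_integral_add measurable_cong_sets[OF that refl])
    then show ?case using add(6,7) sets_MN by (simp add: distrib_left add_ac)
  next
    case (seq U)
    have SUP_int: "(\<integral>\<^sup>+x. (SUP i. U i) x \<partial>K) = (SUP i. \<integral>\<^sup>+x. U i x \<partial>K)" if "sets K = sets borel" for K
      unfolding SUP_apply using seq(1) \<open>incseq U\<close> measurable_cong_sets[OF that refl]
      by (intro nn_integral_monotone_convergence_SUP) auto
    have inc: "incseq (\<lambda>i. \<integral>\<^sup>+x. U i x \<partial>K)" for K
      using \<open>incseq U\<close> unfolding incseq_def by (auto intro!: nn_integral_mono simp: le_fun_def)
    have "(\<integral>\<^sup>+x. (SUP i. U i) x \<partial>mix e M N)
        = (SUP i. ennreal (1 - e) * (\<integral>\<^sup>+x. U i x \<partial>M) + ennreal e * (\<integral>\<^sup>+x. U i x \<partial>N))"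
      using SUP_int sets_MN seq by simp
    also have "\<dots> = ennreal (1 - e) * (SUP i. \<integral>\<^sup>+x. U i x \<partial>M) + ennreal e * (SUP i. \<integral>\<^sup>+x. U i x \<partial>N)"
      using inc by (subst ennreal_SUP_add)
        (auto simp: incseq_def SUP_mult_left_ennreal intro: mult_left_mono)
    finally show ?case using SUP_int sets_MN by simp
  qed
qed

lemma integral_mix:
  fixes f :: "'a::metric_space \<Rightarrow> real"
  assumes M: "M \<in> prob_measures" and N: "N \<in> prob_measures" and e: "0 \<le> e" "e \<le> 1"
    and fM: "integrable M f" and fN: "integrable N f"
  shows "integrable (mix e M N) f"
    and "(\<integral>x. f x \<partial>mix e M N) = (1 - e) * (\<integral>x. f x \<partial>M) + e * (\<integral>x. f x \<partial>N)"
proof -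
  have sets_MN: "sets M = sets borel" "sets N = sets borel" "sets (mix e M N) = sets borel"
    using M N by (simp_all add: prob_measuresD sets_mix)
  have f: "f \<in> borel_measurable borel"
    using fM sets_MN(1) by (metis borel_measurable_integrable measurable_cong_sets)
  have fin: "(\<integral>\<^sup>+x. ennreal (g x) \<partial>K) < \<infinity>"
    if "integrable K f" "g = f \<or> g = (\<lambda>x. - f x) \<or> g = (\<lambda>x. norm (f x))" for K g
  proof -
    have "(\<integral>\<^sup>+x. ennreal (g x) \<partial>K) \<le> (\<integral>\<^sup>+x. ennreal (norm (f x)) \<partial>K)"
      using that(2) by (intro nn_integral_mono) (auto intro: ennreal_leI)
    also have "\<dots> < \<infinity>" using that(1) by (simp add: integrable_iff_bounded)
    finally show ?thesis .
  qed
  have nn_mix: "(\<integral>\<^sup>+x. ennreal (g x) \<partial>mix e M N)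
      = ennreal (1 - e) * (\<integral>\<^sup>+x. ennreal (g x) \<partial>M) + ennreal e * (\<integral>\<^sup>+x. ennreal (g x) \<partial>N)"
    if "g \<in> borel_measurable borel" for g
    using nn_integral_mix[OF M N] that by simp
  show int: "integrable (mix e M N) f"
    unfolding integrable_iff_bounded
    using f sets_MN nn_mix[of "\<lambda>x. norm (f x)"] fin[OF fM] fin[OF fN]
    by (simp add: measurable_cong_sets[OF sets_MN(3) refl] ennreal_mult_less_top)
  show "(\<integral>x. f x \<partial>mix e M N) = (1 - e) * (\<integral>x. f x \<partial>M) + e * (\<integral>x. f x \<partial>N)"
    unfolding real_lebesgue_integral_def[OF int] real_lebesgue_integral_def[OF fM]
      real_lebesgue_integral_def[OF fN]
    using f e fin[OF fM] fin[OF fN]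
    by (simp add: nn_mix enn2real_plus ennreal_mult_less_top enn2real_mult algebra_simps)
qed

lemma influence_functionD:
  assumes "influence_function J M \<Psi>" "N \<in> prob_measures"
  shows "integrable N \<Psi>"
    and "((\<lambda>e. (J (mix e M N) - J M) / e) \<longlongrightarrow> (\<integral>x. \<Psi> x \<partial>N) - (\<integral>x. \<Psi> x \<partial>M)) (at_right 0)"
  using assms unfolding influence_function_def by blast+

lemma influence_function_borel_measurable:
  assumes "influence_function J M \<Psi>" "M \<in> prob_measures"
  shows "\<Psi> \<in> borel_measurable borel"
  using influence_functionD(1)[OF assms] prob_measuresD(1)[OF assms(2)]
  by (metis borel_measurable_integrable measurable_cong_sets)

lemma influence_function_mix_right_derivative:
  assumes M: "M \<in> prob_measures" and N: "N \<in> prob_measures" and e: "0 \<le> e" "e < 1"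
    and \<Psi>: "influence_function J (mix e M N) \<Psi>"
  shows "((\<lambda>t. (J (mix (e + t) M N) - J (mix e M N)) / t) \<longlongrightarrow>
           (\<integral>x. \<Psi> x \<partial>N) - (\<integral>x. \<Psi> x \<partial>M)) (at_right 0)"
proof -
  define K where "K = mix e M N"
  define c where "c = 1 - e"
  have c: "c > 0" using e by (simp add: c_def)
  have "((\<lambda>s. (J (mix s K N) - J K) / s) \<longlongrightarrow> (\<integral>x. \<Psi> x \<partial>N) - (\<integral>x. \<Psi> x \<partial>K)) (at_right 0)"
    using influence_functionD(2)[OF \<Psi> N] unfolding K_def .
  then have "((\<lambda>s. (J (mix s K N) - J K) / s / c) \<longlongrightarrow> ((\<integral>x. \<Psi> x \<partial>N) - (\<integral>x. \<Psi> x \<partial>K)) / c) (at_right 0)"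
    by (intro tendsto_divide tendsto_const) (use c in auto)
  moreover have "(\<integral>x. \<Psi> x \<partial>K) = c * (\<integral>x. \<Psi> x \<partial>M) + e * (\<integral>x. \<Psi> x \<partial>N)"
    unfolding K_def c_def using e M N influence_functionD(1)[OF \<Psi> M] influence_functionD(1)[OF \<Psi> N]
    by (intro integral_mix) auto
  then have "((\<integral>x. \<Psi> x \<partial>N) - (\<integral>x. \<Psi> x \<partial>K)) / c = (\<integral>x. \<Psi> x \<partial>N) - (\<integral>x. \<Psi> x \<partial>M)"
    using c by (simp add: c_def field_simps)
  ultimately have "((\<lambda>s. (J (mix s K N) - J K) / s / c) \<longlongrightarrow> (\<integral>x. \<Psi> x \<partial>N) - (\<integral>x. \<Psi> x \<partial>M)) (at_right 0)"
    by simp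
  \<comment> \<open>the mixtures from K towards N are the mixtures from M towards N, reparametrised by t = c s\<close>
  moreover have "\<forall>\<^sub>F s in at_right 0. (J (mix s K N) - J K) / s / c = (J (mix (e + c * s) M N) - J K) / (c * s)"
    using eventually_at_right_real[OF zero_less_one]
  proof eventually_elim
    case (elim s)
    then show ?case
      using mix_mix[OF M N _ _, of e s] e mult.commute[of s "1 - e"] unfolding K_def c_def by simp
  qed
  ultimately have "((\<lambda>s. (J (mix (e + c * s) M N) - J K) / (c * s)) \<longlongrightarrow> (\<integral>x. \<Psi> x \<partial>N) - (\<integral>x. \<Psi> x \<partial>M)) (at_right 0)"
    using tendsto_cong by fastforce
  then have "((\<lambda>t. (J (mix (e + t) M N) - J K) / t) \<longlongrightarrow> (\<integral>x. \<Psi> x \<partial>N) - (\<integral>x. \<Psi> x \<partial>M))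
      (filtermap (times c) (at_right 0))"
    unfolding filterlim_filtermap .
  moreover have "filtermap (times c) (at_right 0) = at_right 0"
    using filtermap_times_pos_at_right[OF c, of 0] by simp
  ultimately show ?thesis unfolding K_def by simp
qed

lemma influence_function_mix_left_derivative:
  assumes M: "M \<in> prob_measures" and N: "N \<in> prob_measures" and e: "0 < e" "e \<le> 1"
    and \<Psi>: "influence_function J (mix e M N) \<Psi>"
  shows "((\<lambda>t. (J (mix (e - t) M N) - J (mix e M N)) / t) \<longlongrightarrow>
           (\<integral>x. \<Psi> x \<partial>M) - (\<integral>x. \<Psi> x \<partial>N)) (at_right 0)"
proof -
  have "((\<lambda>t. (J (mix (1 - e + t) N M) - J (mix (1 - e) N M)) / t) \<longlongrightarrow>
           (\<integral>x. \<Psi> x \<partial>M) - (\<integral>x. \<Psi> x \<partial>N)) (at_right 0)"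
    using e \<Psi> unfolding mix_swap[OF M N] by (intro influence_function_mix_right_derivative[OF N M]) auto
  then show ?thesis unfolding mix_swap[OF M N] by (simp add: algebra_simps)
qed

lemma has_real_derivative_from_one_sided:
  fixes g :: "real \<Rightarrow> real"
  assumes right: "((\<lambda>t. (g (x + t) - g x) / t) \<longlongrightarrow> D) (at_right 0)"
    and left: "((\<lambda>t. (g (x - t) - g x) / t) \<longlongrightarrow> - D) (at_right 0)"
  shows "(g has_real_derivative D) (at x)"
  unfolding DERIV_def
proof (rule filterlim_split_at)
  show "((\<lambda>h. (g (x + h) - g x) / h) \<longlongrightarrow> D) (at_right 0)"
    using right by simp
  have "((\<lambda>t. - ((g (x - t) - g x) / t)) \<longlongrightarrow> D) (at_right 0)"
    using tendsto_minus[OF left] by simp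
  then show "((\<lambda>h. (g (x + h) - g x) / h) \<longlongrightarrow> D) (at_left 0)"
    unfolding at_left_minus[of 0] filterlim_filtermap by simp
qed

lemma tendsto_at_right_of_difference_quotient:
  fixes f :: "real \<Rightarrow> real"
  assumes "((\<lambda>t. (f t - c) / t) \<longlongrightarrow> d) (at_right 0)"
  shows "(f \<longlongrightarrow> c) (at_right 0)"
proof -
  have "((\<lambda>t. t * ((f t - c) / t) + c) \<longlongrightarrow> 0 * d + c) (at_right 0)"
    by (intro tendsto_intros assms)
  moreover have "\<forall>\<^sub>F t in at_right 0. t * ((f t - c) / t) + c = f t"
    using eventually_at_right_real[OF zero_less_one] by eventually_elim auto
  ultimately show ?thesis using tendsto_cong by fastforce
qed

lemma influence_function_mean_value:
  assumes M: "M \<in> prob_measures" and N: "N \<in> prob_measures"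
    and \<Psi>: "\<And>e. 0 \<le> e \<Longrightarrow> e \<le> 1 \<Longrightarrow> influence_function J (mix e M N) (\<Psi> e)"
  shows "\<exists>e. 0 < e \<and> e < 1 \<and> J N - J M = (\<integral>x. \<Psi> e x \<partial>N) - (\<integral>x. \<Psi> e x \<partial>M)"
proof -
  define g where "g e = J (mix e M N)" for e
  define D where "D e = (\<integral>x. \<Psi> e x \<partial>N) - (\<integral>x. \<Psi> e x \<partial>M)" for e
  have right: "((\<lambda>t. (g (e + t) - g e) / t) \<longlongrightarrow> D e) (at_right 0)" if "0 \<le> e" "e < 1" for e
    unfolding g_def D_def using that by (intro influence_function_mix_right_derivative M N \<Psi>) auto
  have left: "((\<lambda>t. (g (e - t) - g e) / t) \<longlongrightarrow> - D e) (at_right 0)" if "0 < e" "e \<le> 1" for e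
    unfolding g_def D_def using influence_function_mix_left_derivative[OF M N that \<Psi>] that by simp
  have deriv: "(g has_real_derivative D e) (at e)" if "0 < e" "e < 1" for e
    using that by (intro has_real_derivative_from_one_sided right left) auto
  have "continuous_on {0..1} g"
  proof (rule continuous_on_IccI)
    show "(g \<longlongrightarrow> g 0) (at_right 0)"
      using tendsto_at_right_of_difference_quotient[of g] right[of 0] by simp
    have "((\<lambda>t. g (1 - t)) \<longlongrightarrow> g 1) (at_right 0)"
      using tendsto_at_right_of_difference_quotient[of "\<lambda>t. g (1 - t)"] left[of 1] by simp
    then show "(g \<longlongrightarrow> g 1) (at_left 1)"
      unfolding at_left_minus[of 1] at_right_to_0[of "-1"] filtermap_filtermap filterlim_filtermap by simp
    show "g \<midarrow>e\<rightarrow> g e" if "0 < e" "e < 1" for e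
      using DERIV_isCont[OF deriv[OF that]] by (simp add: isCont_def)
  qed simp
  moreover have "g differentiable at e" if "0 < e" "e < 1" for e
    using deriv[OF that] real_differentiable_def by blast
  ultimately obtain l e where e: "0 < e" "e < 1" "(g has_real_derivative l) (at e)" "g 1 - g 0 = l"
    using MVT[of 0 1 g] by auto
  moreover have "g 1 = J N" "g 0 = J M" unfolding g_def using mix_0[OF M N] mix_1[OF M N] by auto
  ultimately show ?thesis using DERIV_unique[OF e(3) deriv[OF e(1,2)]] unfolding D_def by auto
qed

lemma influence_function_mean_value_sequence:
  fixes J :: "'a::metric_space measure \<Rightarrow> real"
  assumes infl: "\<And>K. K \<in> prob_measures \<Longrightarrow> influence_function J K (\<Psi> K)"
    and M: "M \<in> prob_measures" and \<nu>: "\<And>n. \<nu> n \<in> prob_measures"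
  obtains e where "\<And>n. 0 < e n" "\<And>n. e n < 1"
    and "\<And>n. J (\<nu> n) - J M =
      (\<integral>x. \<Psi> (mix (e n) M (\<nu> n)) x \<partial>\<nu> n) - (\<integral>x. \<Psi> (mix (e n) M (\<nu> n)) x \<partial>M)"
proof -
  have "\<forall>n. \<exists>e. 0 < e \<and> e < 1 \<and> J (\<nu> n) - J M =
      (\<integral>x. \<Psi> (mix e M (\<nu> n)) x \<partial>\<nu> n) - (\<integral>x. \<Psi> (mix e M (\<nu> n)) x \<partial>M)"
  proof
    fix n
    show "\<exists>e. 0 < e \<and> e < 1 \<and> J (\<nu> n) - J M =
      (\<integral>x. \<Psi> (mix e M (\<nu> n)) x \<partial>\<nu> n) - (\<integral>x. \<Psi> (mix e M (\<nu> n)) x \<partial>M)"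
    proof (rule influence_function_mean_value[OF M \<nu>])
      fix e :: real assume "0 \<le> e" "e \<le> 1"
      then show "influence_function J (mix e M (\<nu> n)) (\<Psi> (mix e M (\<nu> n)))"
        by (intro infl mix_in_prob_measures M \<nu>)
    qed
  qed
  from choice[OF this] obtain e where "\<forall>n. 0 < e n \<and> e n < 1 \<and> J (\<nu> n) - J M =
      (\<integral>x. \<Psi> (mix (e n) M (\<nu> n)) x \<partial>\<nu> n) - (\<integral>x. \<Psi> (mix (e n) M (\<nu> n)) x \<partial>M)" ..
  then show ?thesis by (intro that) blast+
qed

section \<open>The weak topology\<close>

lemma return_in_prob_measures: "return borel x \<in> prob_measures"
  unfolding prob_measures_def by (auto intro: prob_space_return)

lemma weak_topology_subbasis_cases:
  fixes S :: "'a::metric_space measure set"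
  assumes "S \<in> {{M \<in> prob_measures. (\<integral>x. f x \<partial>M) \<in> U} | (f :: 'a \<Rightarrow> real) U.
        continuous_on UNIV f \<and> bounded (range f) \<and> open U}"
  obtains f :: "'a \<Rightarrow> real" and U :: "real set"
  where "S = {M \<in> prob_measures. (\<integral>x. f x \<partial>M) \<in> U}"
    and "continuous_on UNIV f" "bounded (range f)" "open U"
  using assms by blast

lemma topspace_weak_topology: "topspace (weak_topology :: 'a::metric_space measure topology) = prob_measures"
proof -
  have "prob_measures \<in> {{M \<in> prob_measures. (\<integral>x. f x \<partial>M) \<in> U} | (f :: 'a \<Rightarrow> real) U.
        continuous_on UNIV f \<and> bounded (range f) \<and> open U}"
    by (intro CollectI exI[of _ "\<lambda>_. 0"] exI[of _ UNIV]) auto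
  then show ?thesis
    unfolding weak_topology_def topology_generated_by_topspace by auto
qed

lemma continuous_map_return: "continuous_map euclidean weak_topology (\<lambda>x::'a::metric_space. return borel x)"
  unfolding weak_topology_def
proof (rule continuous_on_generated_topo)
  fix S assume "S \<in> {{M \<in> prob_measures. (\<integral>x. f x \<partial>M) \<in> U} | (f :: 'a \<Rightarrow> real) U.
        continuous_on UNIV f \<and> bounded (range f) \<and> open U}"
  then obtain f :: "'a \<Rightarrow> real" and U where S: "S = {M \<in> prob_measures. (\<integral>x. f x \<partial>M) \<in> U}"
    and f: "continuous_on UNIV f" and U: "open U"
    by (rule weak_topology_subbasis_cases)
  have "(\<lambda>x. return borel x) -` S = f -` U"
    using borel_measurable_continuous_onI[OF f] by (auto simp: S return_in_prob_measures integral_return)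
  then show "openin euclidean ((\<lambda>x. return borel x) -` S \<inter> topspace euclidean)"
    using f U by (simp add: open_vimage)
next
  show "(\<lambda>x. return borel x) ` topspace euclidean \<subseteq> \<Union> {{M \<in> prob_measures. (\<integral>x. f x \<partial>M) \<in> U} | (f :: 'a \<Rightarrow> real) U.
        continuous_on UNIV f \<and> bounded (range f) \<and> open U}"
    using topspace_weak_topology return_in_prob_measures
    unfolding weak_topology_def topology_generated_by_topspace by blast
qed

lemma limitin_weak_topologyI:
  fixes m :: "'i \<Rightarrow> 'a::metric_space measure"
  assumes m: "\<And>n. m n \<in> prob_measures" and M: "M \<in> prob_measures"
    and conv: "\<And>f :: 'a \<Rightarrow> real. continuous_on UNIV f \<Longrightarrow> bounded (range f) \<Longrightarrow>
        ((\<lambda>n. \<integral>x. f x \<partial>m n) \<longlongrightarrow> (\<integral>x. f x \<partial>M)) F"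
  shows "limitin weak_topology m M F"
  unfolding limitin_def topspace_weak_topology
proof (intro conjI M allI impI, elim conjE)
  fix W assume "openin weak_topology W" "M \<in> W"
  then have "generate_topology_on {{M \<in> prob_measures. (\<integral>x. f x \<partial>M) \<in> U} | (f :: 'a \<Rightarrow> real) U.
        continuous_on UNIV f \<and> bounded (range f) \<and> open U} W" "M \<in> W"
    unfolding weak_topology_def by (auto intro: openin_topology_generated_by)
  then show "\<forall>\<^sub>F n in F. m n \<in> W"
  proof induction
    case (Int a b)
    then show ?case by (auto intro: eventually_conj elim: eventually_mono)
  next
    case (UN K)
    then obtain k where "k \<in> K" "M \<in> k" by auto
    with UN(2) have "\<forall>\<^sub>F n in F. m n \<in> k" by blast
    then show ?case by (rule eventually_mono) (use \<open>k \<in> K\<close> in auto)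
  next
    case (Basis S)
    then obtain f :: "'a \<Rightarrow> real" and U where S: "S = {M \<in> prob_measures. (\<integral>x. f x \<partial>M) \<in> U}"
      and f: "continuous_on UNIV f" "bounded (range f)" and U: "open U"
      by (elim weak_topology_subbasis_cases)
    have "\<forall>\<^sub>F n in F. (\<integral>x. f x \<partial>m n) \<in> U"
      using topological_tendstoD[OF conv[OF f] U] Basis(2) S by auto
    then show ?case using m by (auto simp: S elim: eventually_mono)
  qed simp
qed

lemma limitin_weak_topology_mix:
  fixes \<nu> :: "'i \<Rightarrow> 'a::metric_space measure"
  assumes M: "M \<in> prob_measures" and \<nu>: "\<And>n. \<nu> n \<in> prob_measures"
    and e: "\<And>n. 0 \<le> e n" "\<And>n. e n \<le> 1"
    and conv: "\<And>f :: 'a \<Rightarrow> real. continuous_on UNIV f \<Longrightarrow> bounded (range f) \<Longrightarrow>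
        ((\<lambda>n. \<integral>x. f x \<partial>\<nu> n) \<longlongrightarrow> (\<integral>x. f x \<partial>M)) F"
  shows "limitin weak_topology (\<lambda>n. mix (e n) M (\<nu> n)) M F"
proof (rule limitin_weak_topologyI[OF mix_in_prob_measures[OF M \<nu> e] M])
  fix f :: "'a \<Rightarrow> real" assume f: "continuous_on UNIV f" "bounded (range f)"
  then obtain B where B: "\<And>x. \<bar>f x\<bar> \<le> B" unfolding bounded_iff by auto
  have int: "integrable K f" if "K \<in> prob_measures" for K
    using integral_bounded_finite_measure(1)[OF _ _ borel_measurable_continuous_onI[OF f(1)] B]
      prob_measures_finite_measure[OF that] by blast
  have "(\<integral>x. f x \<partial>mix (e n) M (\<nu> n)) - (\<integral>x. f x \<partial>M) = e n * ((\<integral>x. f x \<partial>\<nu> n) - (\<integral>x. f x \<partial>M))" for n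
    using integral_mix(2)[OF M \<nu> e int[OF M] int[OF \<nu>]] by (simp add: algebra_simps)
  then have "\<bar>(\<integral>x. f x \<partial>mix (e n) M (\<nu> n)) - (\<integral>x. f x \<partial>M)\<bar> \<le> \<bar>(\<integral>x. f x \<partial>\<nu> n) - (\<integral>x. f x \<partial>M)\<bar>" for n
    using e[of n] mult_left_le_one_le[of "\<bar>(\<integral>x. f x \<partial>\<nu> n) - (\<integral>x. f x \<partial>M)\<bar>" "e n"]
    by (simp add: abs_mult)
  then have "\<forall>\<^sub>F n in F. norm ((\<integral>x. f x \<partial>mix (e n) M (\<nu> n)) - (\<integral>x. f x \<partial>M))
      \<le> \<bar>(\<integral>x. f x \<partial>\<nu> n) - (\<integral>x. f x \<partial>M)\<bar>"
    by (simp add: always_eventually)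
  moreover have "((\<lambda>n. \<bar>(\<integral>x. f x \<partial>\<nu> n) - (\<integral>x. f x \<partial>M)\<bar>) \<longlongrightarrow> 0) F"
    using conv[OF f] by (intro tendsto_rabs_zero LIM_zero)
  ultimately have "((\<lambda>n. (\<integral>x. f x \<partial>mix (e n) M (\<nu> n)) - (\<integral>x. f x \<partial>M)) \<longlongrightarrow> 0) F"
    by (rule Lim_null_comparison)
  then show "((\<lambda>n. \<integral>x. f x \<partial>mix (e n) M (\<nu> n)) \<longlongrightarrow> (\<integral>x. f x \<partial>M)) F"
    by (rule LIM_zero_cancel)
qed

lemma continuous_map_eval_of_integral:
  fixes \<Psi> :: "'a::metric_space measure \<Rightarrow> 'a \<Rightarrow> real"
  assumes meas: "\<And>M. M \<in> prob_measures \<Longrightarrow> \<Psi> M \<in> borel_measurable borel"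
    and cont: "continuous_map (prod_topology weak_topology weak_topology) euclideanreal
      (\<lambda>(M, N). \<integral>x. \<Psi> M x \<partial>N)"
  shows "continuous_map (prod_topology weak_topology euclidean) euclideanreal (\<lambda>(M, x). \<Psi> M x)"
proof (rule continuous_map_eq)
  have "continuous_map (prod_topology weak_topology euclidean) (prod_topology weak_topology weak_topology)
      (\<lambda>p. (fst p, return borel (snd p)))"
    by (intro continuous_map_pairedI continuous_map_fst
        continuous_map_compose[OF continuous_map_snd continuous_map_return, unfolded o_def])
  then show "continuous_map (prod_topology weak_topology euclidean) euclideanreal
      ((\<lambda>(M, N). \<integral>x. \<Psi> M x \<partial>N) \<circ> (\<lambda>p. (fst p, return borel (snd p))))"
    using cont by (rule continuous_map_compose)
  fix p :: "'a measure \<times> 'a" assume "p \<in> topspace (prod_topology (weak_topology :: 'a measure topology) euclidean)"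
  then have "\<Psi> (fst p) \<in> borel_measurable borel"
    by (intro meas) (auto simp: topspace_weak_topology)
  then show "((\<lambda>(M, N). \<integral>x. \<Psi> M x \<partial>N) \<circ> (\<lambda>p. (fst p, return borel (snd p)))) p = (\<lambda>(M, x). \<Psi> M x) p"
    by (auto simp: integral_return split: prod.splits)
qed

lemma continuous_on_slice:
  assumes "continuous_map (prod_topology X euclidean) euclidean (\<lambda>(M, x). f M x)"
    and "M \<in> topspace X"
  shows "continuous_on UNIV (f M)"
proof -
  have "continuous_map euclidean (prod_topology X euclidean) (\<lambda>x. (M, x))"
    using assms(2) by (intro continuous_map_pairedI) auto
  from continuous_map_compose[OF this assms(1)] show ?thesis
    by (simp add: o_def)
qed

lemma continuous_influence_functions:
  fixes \<Psi> :: "'a::metric_space measure \<Rightarrow> 'a \<Rightarrow> real"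
  assumes infl: "\<And>M. M \<in> prob_measures \<Longrightarrow> influence_function J M (\<Psi> M)"
    and cont: "continuous_map (prod_topology weak_topology weak_topology) euclideanreal
      (\<lambda>(M, N). \<integral>x. \<Psi> M x \<partial>N)"
  shows "continuous_map (prod_topology weak_topology euclidean) euclideanreal (\<lambda>(M, x). \<Psi> M x)"
    and "M \<in> prob_measures \<Longrightarrow> continuous_on UNIV (\<Psi> M)"
proof -
  show joint: "continuous_map (prod_topology weak_topology euclidean) euclideanreal (\<lambda>(M, x). \<Psi> M x)"
    using infl influence_function_borel_measurable
    by (intro continuous_map_eval_of_integral cont) blast
  show "continuous_on UNIV (\<Psi> M)" if "M \<in> prob_measures"
    by (rule continuous_on_slice[OF joint]) (simp add: topspace_weak_topology that)
qed

lemma uniform_limit_of_continuous_map_compact: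
  fixes f :: "'m \<Rightarrow> 'a::metric_space \<Rightarrow> real"
  assumes compact: "compact (UNIV :: 'a set)"
    and cont: "continuous_map (prod_topology X euclidean) euclideanreal (\<lambda>(M, x). f M x)"
    and lim: "limitin X m M F"
  shows "uniform_limit UNIV (\<lambda>n. f (m n)) (f M) F"
proof (rule uniform_limitI)
  fix \<epsilon> :: real assume "\<epsilon> > 0"
  have M: "M \<in> topspace X" using lim by (simp add: limitin_def)
  have "continuous_map (prod_topology X euclidean) euclideanreal (\<lambda>p. (\<lambda>(M, x). f M x) p - f M (snd p))"
    using continuous_on_slice[OF cont M]
    by (intro continuous_map_diff cont continuous_map_compose[OF continuous_map_snd, unfolded o_def]) auto
  then have "openin (prod_topology X euclidean) {p \<in> topspace (prod_topology X euclidean).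
      (\<lambda>(M', x). f M' x) p - f M (snd p) \<in> {-\<epsilon><..<\<epsilon>}}" (is "openin _ ?T")
    by (rule openin_continuous_map_preimage) auto
  moreover have "{M} \<times> UNIV \<subseteq> ?T"
    using M \<open>\<epsilon> > 0\<close> by auto
  ultimately obtain W V where W: "openin X W" "M \<in> W" "UNIV \<subseteq> V" "W \<times> V \<subseteq> ?T"
    using tube_lemma_right[of X euclidean ?T UNIV M] compact M by auto
  have close: "\<bar>f M' x - f M x\<bar> < \<epsilon>" if "M' \<in> W" for M' x
  proof -
    have "(M', x) \<in> ?T" using that W(3,4) by blast
    then show ?thesis by (simp add: abs_less_iff)
  qed
  have "\<forall>\<^sub>F n in F. m n \<in> W" using lim W by (simp add: limitin_def)
  then show "\<forall>\<^sub>F n in F. \<forall>x\<in>UNIV. dist (f (m n) x) (f M x) < \<epsilon>"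
    by eventually_elim (simp add: dist_real_def close)
qed

lemma uniform_limit_influence_functions:
  fixes \<Psi> :: "'a::metric_space measure \<Rightarrow> 'a \<Rightarrow> real"
  assumes compact: "compact (UNIV :: 'a set)"
    and infl: "\<And>M. M \<in> prob_measures \<Longrightarrow> influence_function J M (\<Psi> M)"
    and cont: "continuous_map (prod_topology weak_topology weak_topology) euclideanreal
      (\<lambda>(M, N). \<integral>x. \<Psi> M x \<partial>N)"
    and lim: "limitin weak_topology m M F"
  shows "uniform_limit UNIV (\<lambda>n. \<Psi> (m n)) (\<Psi> M) F"
proof (rule uniform_limit_of_continuous_map_compact[OF compact _ lim])
  show "continuous_map (prod_topology weak_topology euclidean) euclideanreal (\<lambda>(M, x). \<Psi> M x)"
    by (rule continuous_influence_functions(1)[OF infl cont])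
qed

section \<open>Uniform boundedness\<close>

lemma Baire_ball_in_cover:
  fixes E :: "nat \<Rightarrow> 'a::{metric_space, complete_space} set"
  assumes closed: "\<And>k. closed (E k)" and cover: "(\<Union>k. E k) = UNIV"
  shows "\<exists>k x r. r > 0 \<and> ball x r \<subseteq> E k"
proof -
  have "\<exists>k. interior (E k) \<noteq> {}"
  proof (rule ccontr)
    assume "\<not> ?thesis"
    then have "euclidean interior_of \<Union>(range E) = {}"
      using closed by (intro Baire_category_alt) (auto simp: completely_metrizable_space_euclidean)
    then show False using cover by simp
  qed
  then obtain k x where "x \<in> interior (E k)" by blast
  then obtain r where "r > 0" "ball x r \<subseteq> interior (E k)"
    using open_contains_ball_eq[OF open_interior] by blast
  then show ?thesis using interior_subset by blast
qed

theorem uniform_boundedness: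
  fixes T :: "nat \<Rightarrow> 'a::{real_normed_vector, complete_space} \<Rightarrow> 'b::real_normed_vector"
  assumes lin: "\<And>n. bounded_linear (T n)"
    and pointwise: "\<And>g. bounded (range (\<lambda>n. T n g))"
  shows "\<exists>C. \<forall>n g. norm (T n g) \<le> C * norm g"
proof -
  define E where "E k = {g. \<forall>n. norm (T n g) \<le> real k}" for k :: nat
  have closed_E: "closed (E k)" for k
  proof -
    have "E k = (\<Inter>n. {g. norm (T n g) \<le> real k})" unfolding E_def by auto
    moreover have "closed {g. norm (T n g) \<le> real k}" for n
      by (intro closed_Collect_le continuous_intros linear_continuous_on lin)
    ultimately show ?thesis by auto
  qed
  have "\<exists>k. g \<in> E k" for g
  proof -
    obtain B where "\<forall>n. norm (T n g) \<le> B" using pointwise[of g] unfolding bounded_iff by auto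
    moreover obtain k :: nat where "B \<le> real k" using real_arch_simple by blast
    ultimately have "\<forall>n. norm (T n g) \<le> real k" by (meson order_trans)
    then show ?thesis unfolding E_def by blast
  qed
  then have "(\<Union>k. E k) = UNIV" by blast
  from Baire_ball_in_cover[OF closed_E this]
  obtain k g0 r where r: "r > 0" "ball g0 r \<subseteq> E k" by blast
  have "norm (T n g) \<le> (4 * real k / r) * norm g" for n g
  proof (cases "g = 0")
    case True
    then show ?thesis using linear_0[OF bounded_linear.linear[OF lin]] by simp
  next
    case False
    define c where "c = r / (2 * norm g)"
    have c: "c > 0" using False r by (simp add: c_def)
    have "g0 + c *\<^sub>R g \<in> ball g0 r" "g0 \<in> ball g0 r"
      using False r by (simp_all add: c_def dist_norm)
    then have "norm (T n (g0 + c *\<^sub>R g)) \<le> real k" "norm (T n g0) \<le> real k"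
      using r unfolding E_def by blast+
    moreover have "T n (g0 + c *\<^sub>R g) = T n g0 + c *\<^sub>R T n g"
      using bounded_linear.linear[OF lin] by (simp add: linear_add linear_scale)
    ultimately have "c * norm (T n g) \<le> 2 * real k"
      using c norm_triangle_ineq4[of "T n (g0 + c *\<^sub>R g)" "T n g0"] by simp
    then show ?thesis
      using c False r by (simp add: c_def field_simps)
  qed
  then show ?thesis by blast
qed

section \<open>Weakly differentiable families of measures\<close>

lemma has_derivative_at_real:
  fixes f :: "'a::real_normed_vector \<Rightarrow> real"
  shows "(f has_derivative D) (at \<theta>) \<longleftrightarrow>
    bounded_linear D \<and> ((\<lambda>h. (f (\<theta> + h) - f \<theta> - D h) / norm h) \<longlongrightarrow> 0) (at 0)"
  using tendsto_rabs_zero_iff[of "\<lambda>h. (f (\<theta> + h) - f \<theta> - D h) / norm h" "at 0"]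
  by (simp add: has_derivative_at abs_divide)

lemma has_derivative_of_little_o_difference:
  fixes f g :: "'a::real_normed_vector \<Rightarrow> real"
  assumes g: "(g has_derivative D) (at \<theta>)"
    and small: "((\<lambda>h. (f (\<theta> + h) - f \<theta> - (g (\<theta> + h) - g \<theta>)) / norm h) \<longlongrightarrow> 0) (at 0)"
  shows "(f has_derivative D) (at \<theta>)"
proof -
  have "bounded_linear D" and "((\<lambda>h. (g (\<theta> + h) - g \<theta> - D h) / norm h) \<longlongrightarrow> 0) (at 0)"
    using g by (simp_all add: has_derivative_at_real)
  moreover have "(f (\<theta> + h) - f \<theta> - (g (\<theta> + h) - g \<theta>)) / norm h + (g (\<theta> + h) - g \<theta> - D h) / norm h
      = (f (\<theta> + h) - f \<theta> - D h) / norm h" for h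
    by (simp add: add_divide_distrib[symmetric])
  then have "((\<lambda>h. (f (\<theta> + h) - f \<theta> - D h) / norm h) \<longlongrightarrow> 0) (at 0)"
    using tendsto_add[OF small calculation(2)] by simp
  ultimately show ?thesis by (simp add: has_derivative_at_real)
qed

lemma bounded_linear_integral_bcontfun:
  assumes "finite_measure K" "sets K = sets (borel :: 'a::metric_space measure)"
  shows "bounded_linear (\<lambda>u :: 'a \<Rightarrow>\<^sub>C real. \<integral>x. apply_bcontfun u x \<partial>K)"
proof (rule bounded_linear_intro)
  fix u v :: "'a \<Rightarrow>\<^sub>C real" and r :: real
  have bound: "\<bar>apply_bcontfun u x\<bar> \<le> norm u" for u :: "'a \<Rightarrow>\<^sub>C real" and x
    using norm_bounded[of u x] by simp
  note integral_bounded_finite_measure[OF assms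
      borel_measurable_continuous_onI[OF continuous_on_apply_bcontfun] bound]
  then show "(\<integral>x. apply_bcontfun (u + v) x \<partial>K) = (\<integral>x. apply_bcontfun u x \<partial>K) + (\<integral>x. apply_bcontfun v x \<partial>K)"
    and "(\<integral>x. apply_bcontfun (r *\<^sub>R u) x \<partial>K) = r *\<^sub>R (\<integral>x. apply_bcontfun u x \<partial>K)"
    and "norm (\<integral>x. apply_bcontfun u x \<partial>K) \<le> norm u * measure K UNIV"
    by simp_all
qed

definition derivative_integral ::
    "('b::euclidean_space \<Rightarrow> 'a measure) \<Rightarrow> ('b \<Rightarrow> 'a measure) \<Rightarrow> ('a \<Rightarrow> real) \<Rightarrow> 'b \<Rightarrow> real" where
  "derivative_integral P N f h = (\<Sum>b\<in>Basis. (h \<bullet> b) * ((\<integral>x. f x \<partial>P b) - (\<integral>x. f x \<partial>N b)))"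

lemma bounded_linear_derivative_integral: "bounded_linear (derivative_integral P N f)"
  unfolding derivative_integral_def[abs_def]
  by (intro bounded_linear_sum bounded_linear_mult_const bounded_linear_inner_left)

lemma bounded_linear_derivative_integral_bcontfun:
  assumes fin: "\<And>b. b \<in> Basis \<Longrightarrow> finite_measure (P b) \<and> sets (P b) = sets borel \<and>
      finite_measure (N b) \<and> sets (N b) = sets borel"
  shows "bounded_linear (\<lambda>u :: 'a::metric_space \<Rightarrow>\<^sub>C real. derivative_integral P N (apply_bcontfun u) h)"
  unfolding derivative_integral_def
proof (intro bounded_linear_sum bounded_linear_const_mult bounded_linear_sub)
  fix b :: 'b assume "b \<in> Basis"
  then show "bounded_linear (\<lambda>u :: 'a \<Rightarrow>\<^sub>C real. \<integral>x. apply_bcontfun u x \<partial>P b)"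
    and "bounded_linear (\<lambda>u :: 'a \<Rightarrow>\<^sub>C real. \<integral>x. apply_bcontfun u x \<partial>N b)"
    using fin by (simp_all add: bounded_linear_integral_bcontfun)
qed

lemma abs_derivative_integral_le:
  fixes f :: "'a::metric_space \<Rightarrow> real"
  assumes fin: "\<And>b. b \<in> Basis \<Longrightarrow> finite_measure (P b) \<and> sets (P b) = sets borel \<and>
      finite_measure (N b) \<and> sets (N b) = sets borel"
    and f: "f \<in> borel_measurable borel" and B: "\<And>x. \<bar>f x\<bar> \<le> B"
  shows "\<bar>derivative_integral P N f h\<bar>
    \<le> B * (\<Sum>b\<in>Basis. measure (P b) UNIV + measure (N b) UNIV) * norm h"
proof -
  have "\<bar>(h \<bullet> b) * ((\<integral>x. f x \<partial>P b) - (\<integral>x. f x \<partial>N b))\<bar>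
      \<le> norm h * (B * (measure (P b) UNIV + measure (N b) UNIV))" if b: "b \<in> Basis" for b
  proof -
    have "\<bar>\<integral>x. f x \<partial>P b\<bar> \<le> B * measure (P b) UNIV" "\<bar>\<integral>x. f x \<partial>N b\<bar> \<le> B * measure (N b) UNIV"
      using integral_bounded_finite_measure(2)[OF _ _ f B] fin[OF b] by blast+
    then have "\<bar>(\<integral>x. f x \<partial>P b) - (\<integral>x. f x \<partial>N b)\<bar> \<le> B * (measure (P b) UNIV + measure (N b) UNIV)"
      by (simp add: algebra_simps)
    then show ?thesis
      unfolding abs_mult using Basis_le_norm[OF b] by (intro mult_mono) auto
  qed
  then have "\<bar>derivative_integral P N f h\<bar>
      \<le> (\<Sum>b\<in>Basis. norm h * (B * (measure (P b) UNIV + measure (N b) UNIV)))"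
    unfolding derivative_integral_def by (intro order_trans[OF sum_abs sum_mono])
  then show ?thesis by (simp add: sum_distrib_left mult_ac)
qed

lemma weakly_differentiable_atE:
  fixes \<mu> :: "'b::euclidean_space \<Rightarrow> 'a::metric_space measure"
  assumes "weakly_differentiable_at \<mu> \<theta>"
  obtains P N :: "'b \<Rightarrow> 'a measure"
  where "\<And>b. b \<in> Basis \<Longrightarrow> finite_measure (P b) \<and> sets (P b) = sets borel \<and>
      finite_measure (N b) \<and> sets (N b) = sets borel"
    and "\<And>f. continuous_on UNIV f \<Longrightarrow> bounded (range f) \<Longrightarrow>
      ((\<lambda>t. \<integral>x. f x \<partial>\<mu> t) has_derivative derivative_integral P N f) (at \<theta>)"
proof -
  obtain P N :: "'b \<Rightarrow> 'a measure"
    where fin: "\<forall>b\<in>Basis. finite_measure (P b) \<and> sets (P b) = sets borel \<and>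
      finite_measure (N b) \<and> sets (N b) = sets borel"
    and lim: "\<And>f. continuous_on UNIV f \<and> bounded (range f) \<Longrightarrow>
      ((\<lambda>h. ((\<integral>x. f x \<partial>\<mu> (\<theta> + h)) - (\<integral>x. f x \<partial>\<mu> \<theta>) - derivative_integral P N f h) / norm h)
        \<longlongrightarrow> 0) (at 0)"
    using assms unfolding weakly_differentiable_at_def derivative_integral_def by blast
  show ?thesis
  proof
    show "((\<lambda>t. \<integral>x. f x \<partial>\<mu> t) has_derivative derivative_integral P N f) (at \<theta>)"
      if "continuous_on UNIV f" "bounded (range f)" for f
      using lim that bounded_linear_derivative_integral by (simp add: has_derivative_at_real)
  qed (use fin in blast)
qed

lemma weakly_differentiable_at_has_derivative_integral:
  fixes \<mu> :: "'b::euclidean_space \<Rightarrow> 'a::metric_space measure" and f :: "'a \<Rightarrow> real"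
  assumes "weakly_differentiable_at \<mu> \<theta>" "continuous_on UNIV f" "bounded (range f)"
  obtains D where "((\<lambda>t. \<integral>x. f x \<partial>\<mu> t) has_derivative D) (at \<theta>)"
proof -
  obtain P N :: "'b \<Rightarrow> 'a measure"
    where "\<And>b. b \<in> Basis \<Longrightarrow> finite_measure (P b) \<and> sets (P b) = sets borel \<and>
      finite_measure (N b) \<and> sets (N b) = sets borel"
    and deriv: "\<And>f. continuous_on UNIV f \<Longrightarrow> bounded (range f) \<Longrightarrow>
      ((\<lambda>t. \<integral>x. f x \<partial>\<mu> t) has_derivative derivative_integral P N f) (at \<theta>)"
    using weakly_differentiable_atE[OF assms(1)] by blast
  from deriv[OF assms(2,3)] show ?thesis by (rule that)
qed

lemma tendsto_integral_weakly_differentiable_at: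
  fixes \<mu> :: "'b::euclidean_space \<Rightarrow> 'a::metric_space measure" and f :: "'a \<Rightarrow> real"
  assumes diff: "weakly_differentiable_at \<mu> \<theta>" and X: "X \<longlonglongrightarrow> 0"
    and f: "continuous_on UNIV f" "bounded (range f)"
  shows "(\<lambda>n. \<integral>x. f x \<partial>\<mu> (\<theta> + X n)) \<longlonglongrightarrow> (\<integral>x. f x \<partial>\<mu> \<theta>)"
proof -
  obtain D where "((\<lambda>t. \<integral>x. f x \<partial>\<mu> t) has_derivative D) (at \<theta>)"
    using weakly_differentiable_at_has_derivative_integral[OF diff f] .
  then have "isCont (\<lambda>t. \<integral>x. f x \<partial>\<mu> t) \<theta>"
    by (rule has_derivative_continuous)
  moreover have "(\<lambda>n. \<theta> + X n) \<longlonglongrightarrow> \<theta>"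
    using tendsto_add[OF tendsto_const X] by simp
  ultimately show ?thesis by (rule isCont_tendsto_compose)
qed

lemma remainder_functionals_uniformly_bounded:
  fixes \<mu> :: "'b::euclidean_space \<Rightarrow> 'a::metric_space measure"
  assumes \<mu>: "\<And>t. \<mu> t \<in> prob_measures"
    and fin: "\<And>b. b \<in> Basis \<Longrightarrow> finite_measure (P b) \<and> sets (P b) = sets borel \<and>
      finite_measure (N b) \<and> sets (N b) = sets borel"
    and deriv: "\<And>f. continuous_on UNIV f \<Longrightarrow> bounded (range f) \<Longrightarrow>
      ((\<lambda>t. \<integral>x. f x \<partial>\<mu> t) has_derivative derivative_integral P N f) (at \<theta>)"
    and X: "filterlim X (at 0) sequentially"
  shows "\<exists>C. \<forall>n (u :: 'a \<Rightarrow>\<^sub>C real).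
    \<bar>((\<integral>x. apply_bcontfun u x \<partial>\<mu> (\<theta> + X n)) - (\<integral>x. apply_bcontfun u x \<partial>\<mu> \<theta>)
      - derivative_integral P N (apply_bcontfun u) (X n)) / norm (X n)\<bar> \<le> C * norm u"
proof -
  define T where "T n u = ((\<integral>x. apply_bcontfun u x \<partial>\<mu> (\<theta> + X n)) - (\<integral>x. apply_bcontfun u x \<partial>\<mu> \<theta>)
      - derivative_integral P N (apply_bcontfun u) (X n)) / norm (X n)" for n and u :: "'a \<Rightarrow>\<^sub>C real"
  have lin: "bounded_linear (T n)" for n
  proof -
    have "bounded_linear (\<lambda>u. (\<integral>x. apply_bcontfun u x \<partial>\<mu> (\<theta> + X n)) - (\<integral>x. apply_bcontfun u x \<partial>\<mu> \<theta>)
        - derivative_integral P N (apply_bcontfun u) (X n))"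
      using prob_measures_finite_measure[OF \<mu>]
      by (intro bounded_linear_sub bounded_linear_integral_bcontfun
          bounded_linear_derivative_integral_bcontfun fin) auto
    then show ?thesis
      unfolding T_def[abs_def] by (rule bounded_linear_compose[OF bounded_linear_divide])
  qed
  have "(\<lambda>n. T n u) \<longlonglongrightarrow> 0" for u
  proof -
    have "((\<lambda>h. ((\<integral>x. apply_bcontfun u x \<partial>\<mu> (\<theta> + h)) - (\<integral>x. apply_bcontfun u x \<partial>\<mu> \<theta>)
        - derivative_integral P N (apply_bcontfun u) h) / norm h) \<longlongrightarrow> 0) (at 0)"
      using deriv[OF continuous_on_apply_bcontfun bounded_apply_bcontfun]
      by (simp add: has_derivative_at_real)
    from filterlim_compose[OF this X] show ?thesis unfolding T_def by simp
  qed
  then have "bounded (range (\<lambda>n. T n u))" for u by (rule convergent_imp_bounded)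
  from uniform_boundedness[OF lin this] show ?thesis
    unfolding T_def real_norm_def .
qed

lemma weakly_differentiable_at_bounded_quotients:
  fixes \<mu> :: "'b::euclidean_space \<Rightarrow> 'a::metric_space measure"
  assumes \<mu>: "\<And>t. \<mu> t \<in> prob_measures"
    and diff: "weakly_differentiable_at \<mu> \<theta>"
    and X_ne: "\<And>n. X n \<noteq> 0" and X_lim: "X \<longlonglongrightarrow> 0"
  obtains C where "\<And>n f B. continuous_on UNIV f \<Longrightarrow> (\<And>x. \<bar>f x\<bar> \<le> B) \<Longrightarrow>
    \<bar>(\<integral>x. f x \<partial>\<mu> (\<theta> + X n)) - (\<integral>x. f x \<partial>\<mu> \<theta>)\<bar> \<le> C * B * norm (X n)"
proof -
  obtain P N :: "'b \<Rightarrow> 'a measure"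
    where fin: "\<And>b. b \<in> Basis \<Longrightarrow> finite_measure (P b) \<and> sets (P b) = sets borel \<and>
      finite_measure (N b) \<and> sets (N b) = sets borel"
    and deriv: "\<And>f. continuous_on UNIV f \<Longrightarrow> bounded (range f) \<Longrightarrow>
      ((\<lambda>t. \<integral>x. f x \<partial>\<mu> t) has_derivative derivative_integral P N f) (at \<theta>)"
    using weakly_differentiable_atE[OF diff] by blast
  have "filterlim X (at 0) sequentially"
    using X_ne X_lim by (simp add: filterlim_at)
  from remainder_functionals_uniformly_bounded[OF \<mu> fin deriv this]
  obtain C where C: "\<And>n u. \<bar>((\<integral>x. apply_bcontfun u x \<partial>\<mu> (\<theta> + X n)) - (\<integral>x. apply_bcontfun u x \<partial>\<mu> \<theta>)
      - derivative_integral P N (apply_bcontfun u) (X n)) / norm (X n)\<bar> \<le> C * norm u"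
    by blast
  define K where "K = (\<Sum>b\<in>Basis. measure (P b) UNIV + measure (N b) UNIV)"
  have "\<bar>(\<integral>x. f x \<partial>\<mu> (\<theta> + X n)) - (\<integral>x. f x \<partial>\<mu> \<theta>)\<bar> \<le> (max C 0 + K) * B * norm (X n)"
    if f: "continuous_on UNIV f" and B: "\<And>x. \<bar>f x\<bar> \<le> B" for n f B
  proof -
    define u where "u = Bcontfun f"
    have u: "apply_bcontfun u = f"
      unfolding u_def using bcontfun_normI[OF f, of B] B by (simp add: Bcontfun_inverse)
    have "norm u \<le> B" using norm_bound[of u B] B by (simp add: u)
    then have "C * norm u \<le> max C 0 * B"
      using mult_right_mono[of C "max C 0" "norm u"] mult_left_mono[of "norm u" B "max C 0"] by simp
    then have "C * norm u * norm (X n) \<le> max C 0 * B * norm (X n)"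
      by (rule mult_right_mono) simp
    moreover have "\<bar>(\<integral>x. f x \<partial>\<mu> (\<theta> + X n)) - (\<integral>x. f x \<partial>\<mu> \<theta>) - derivative_integral P N f (X n)\<bar>
        \<le> C * norm u * norm (X n)"
      using C[of n u] X_ne[of n] by (simp add: u abs_divide divide_le_eq)
    ultimately have "\<bar>(\<integral>x. f x \<partial>\<mu> (\<theta> + X n)) - (\<integral>x. f x \<partial>\<mu> \<theta>) - derivative_integral P N f (X n)\<bar>
        \<le> max C 0 * B * norm (X n)"
      by linarith
    moreover have "\<bar>derivative_integral P N f (X n)\<bar> \<le> B * K * norm (X n)"
      unfolding K_def using abs_derivative_integral_le[OF fin borel_measurable_continuous_onI[OF f] B] .
    ultimately show ?thesis by (simp add: algebra_simps)
  qed
  then show ?thesis by (rule that)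
qed

lemma tendsto_quotient_uniform_limit:
  fixes \<nu> :: "nat \<Rightarrow> 'a::metric_space measure" and X :: "nat \<Rightarrow> 'b::real_normed_vector"
  assumes C: "\<And>n f B. continuous_on UNIV f \<Longrightarrow> (\<And>x. \<bar>f x\<bar> \<le> B) \<Longrightarrow>
      \<bar>(\<integral>x. f x \<partial>\<nu> n) - (\<integral>x. f x \<partial>M)\<bar> \<le> C * B * norm (X n)"
    and X: "\<And>n. X n \<noteq> 0"
    and cont: "\<And>n. continuous_on UNIV (F n)" "continuous_on UNIV L"
    and unif: "uniform_limit UNIV F L sequentially"
  shows "(\<lambda>n. ((\<integral>x. F n x - L x \<partial>\<nu> n) - (\<integral>x. F n x - L x \<partial>M)) / norm (X n)) \<longlonglongrightarrow> 0"
proof (rule tendstoI)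
  fix \<epsilon> :: real assume "\<epsilon> > 0"
  define \<delta> where "\<delta> = \<epsilon> / (\<bar>C\<bar> + 1)"
  have "\<delta> > 0" "\<bar>C\<bar> * \<delta> < \<epsilon>"
    using \<open>\<epsilon> > 0\<close> by (simp_all add: \<delta>_def field_simps)
  from uniform_limitD[OF unif \<open>\<delta> > 0\<close>]
  show "\<forall>\<^sub>F n in sequentially.
      dist (((\<integral>x. F n x - L x \<partial>\<nu> n) - (\<integral>x. F n x - L x \<partial>M)) / norm (X n)) 0 < \<epsilon>"
  proof eventually_elim
    case (elim n)
    then have "\<bar>F n x - L x\<bar> \<le> \<delta>" for x
      by (simp add: dist_real_def less_imp_le)
    moreover have "continuous_on UNIV (\<lambda>x. F n x - L x)"
      using cont by (intro continuous_intros)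
    ultimately have "\<bar>(\<integral>x. F n x - L x \<partial>\<nu> n) - (\<integral>x. F n x - L x \<partial>M)\<bar> \<le> C * \<delta> * norm (X n)"
      by (intro C)
    then have "\<bar>((\<integral>x. F n x - L x \<partial>\<nu> n) - (\<integral>x. F n x - L x \<partial>M)) / norm (X n)\<bar> \<le> C * \<delta>"
      using X[of n] by (simp add: abs_divide divide_le_eq)
    moreover have "C * \<delta> \<le> \<bar>C\<bar> * \<delta>"
      using \<open>\<delta> > 0\<close> by (simp add: mult_right_mono)
    ultimately show ?case using \<open>\<bar>C\<bar> * \<delta> < \<epsilon>\<close> by (simp add: dist_real_def)
  qed
qed

section \<open>The chain rule\<close>

lemma influence_remainder_little_o:
  fixes J :: "'a::metric_space measure \<Rightarrow> real"
    and \<Psi> :: "'a measure \<Rightarrow> 'a \<Rightarrow> real"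
    and \<mu> :: "'b::euclidean_space \<Rightarrow> 'a measure"
  assumes compact: "compact (UNIV :: 'a set)"
    and infl: "\<And>M. M \<in> prob_measures \<Longrightarrow> influence_function J M (\<Psi> M)"
    and cont: "continuous_map (prod_topology weak_topology weak_topology) euclideanreal
      (\<lambda>(M, N). \<integral>x. \<Psi> M x \<partial>N)"
    and \<mu>: "\<And>t. \<mu> t \<in> prob_measures"
    and diff: "weakly_differentiable_at \<mu> \<theta>"
  shows "((\<lambda>h. (J (\<mu> (\<theta> + h)) - J (\<mu> \<theta>)
      - ((\<integral>x. \<Psi> (\<mu> \<theta>) x \<partial>\<mu> (\<theta> + h)) - (\<integral>x. \<Psi> (\<mu> \<theta>) x \<partial>\<mu> \<theta>))) / norm h) \<longlongrightarrow> 0) (at 0)"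
    (is "(?R \<longlongrightarrow> 0) (at 0)")
proof (unfold tendsto_at_iff_sequentially, intro allI impI)
  fix X :: "nat \<Rightarrow> 'b" assume X: "\<forall>n. X n \<in> UNIV - {0}" and X_lim: "X \<longlonglongrightarrow> 0"
  define \<mu>0 where "\<mu>0 = \<mu> \<theta>"
  define \<nu> where "\<nu> n = \<mu> (\<theta> + X n)" for n
  have \<mu>0: "\<mu>0 \<in> prob_measures" and \<nu>: "\<nu> n \<in> prob_measures" for n
    unfolding \<mu>0_def \<nu>_def by (rule \<mu>)+
  have X_nonzero: "X n \<noteq> 0" for n
    using X by auto
  obtain C where C: "\<And>n f B. continuous_on UNIV f \<Longrightarrow> (\<And>x. \<bar>f x\<bar> \<le> B) \<Longrightarrow>
      \<bar>(\<integral>x. f x \<partial>\<nu> n) - (\<integral>x. f x \<partial>\<mu>0)\<bar> \<le> C * B * norm (X n)"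
    using weakly_differentiable_at_bounded_quotients[OF \<mu> diff X_nonzero X_lim] unfolding \<nu>_def \<mu>0_def
    by blast
  obtain e where e: "\<And>n. 0 < e n" "\<And>n. e n < 1"
    and mean_value: "\<And>n. J (\<nu> n) - J \<mu>0 =
      (\<integral>x. \<Psi> (mix (e n) \<mu>0 (\<nu> n)) x \<partial>\<nu> n) - (\<integral>x. \<Psi> (mix (e n) \<mu>0 (\<nu> n)) x \<partial>\<mu>0)"
    using influence_function_mean_value_sequence[where \<nu>=\<nu>, OF infl \<mu>0 \<nu>] by blast
  define m where "m n = mix (e n) \<mu>0 (\<nu> n)" for n
  have m: "m n \<in> prob_measures" for n
    unfolding m_def using e[of n] by (intro mix_in_prob_measures \<mu>0 \<nu>) auto
  have \<Psi>_cont: "continuous_on UNIV (\<Psi> M)" if "M \<in> prob_measures" for M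
    by (rule continuous_influence_functions(2)[OF infl cont that])
  have lim: "limitin weak_topology m \<mu>0 sequentially"
    unfolding m_def
  proof (rule limitin_weak_topology_mix[where \<nu>=\<nu>, OF \<mu>0 \<nu>])
    show "0 \<le> e n" "e n \<le> 1" for n
      using e[of n] by auto
    show "(\<lambda>n. \<integral>x. f x \<partial>\<nu> n) \<longlonglongrightarrow> (\<integral>x. f x \<partial>\<mu>0)"
      if "continuous_on UNIV f" "bounded (range f)" for f :: "'a \<Rightarrow> real"
      unfolding \<nu>_def \<mu>0_def by (rule tendsto_integral_weakly_differentiable_at[OF diff X_lim that])
  qed
  have unif: "uniform_limit UNIV (\<lambda>n. \<Psi> (m n)) (\<Psi> \<mu>0) sequentially"
    by (rule uniform_limit_influence_functions[OF compact infl cont lim])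
  have quotient: "(\<lambda>n. ((\<integral>x. \<Psi> (m n) x - \<Psi> \<mu>0 x \<partial>\<nu> n) - (\<integral>x. \<Psi> (m n) x - \<Psi> \<mu>0 x \<partial>\<mu>0)) / norm (X n))
      \<longlonglongrightarrow> 0"
    by (rule tendsto_quotient_uniform_limit[where \<nu>=\<nu> and X=X and F="\<lambda>n. \<Psi> (m n)",
          OF C X_nonzero \<Psi>_cont[OF m] \<Psi>_cont[OF \<mu>0] unif])
  have R_eq: "?R (X n) = ((\<integral>x. \<Psi> (m n) x - \<Psi> \<mu>0 x \<partial>\<nu> n) - (\<integral>x. \<Psi> (m n) x - \<Psi> \<mu>0 x \<partial>\<mu>0)) / norm (X n)"
    for n
  proof -
    have "integrable K (\<Psi> (m n))" "integrable K (\<Psi> \<mu>0)" if "K \<in> prob_measures" for K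
      using influence_functionD(1) infl m \<mu>0 that by blast+
    then show ?thesis
      using mean_value[of n] \<mu>0 \<nu> unfolding m_def \<mu>0_def \<nu>_def by (simp add: algebra_simps)
  qed
  show "(?R \<circ> X) \<longlonglongrightarrow> 0"
    unfolding o_def R_eq by (rule quotient)
qed

theorem theorem1:
  fixes J :: "'a::metric_space measure \<Rightarrow> real"
    and \<Psi> :: "'a measure \<Rightarrow> 'a \<Rightarrow> real"
    and \<mu> :: "'b::euclidean_space \<Rightarrow> 'a measure"
    and \<theta> :: 'b
  assumes "compact (UNIV :: 'a set)"
    and "\<And>M. M \<in> prob_measures \<Longrightarrow> influence_function J M (\<Psi> M)"
    and "continuous_map (prod_topology weak_topology weak_topology) euclideanreal
           (\<lambda>(M, N). \<integral>x. \<Psi> M x \<partial>N)"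
    and "\<And>t. \<mu> t \<in> prob_measures"
    and "\<And>t. weakly_differentiable_at \<mu> t"
  shows "\<exists>D. ((\<lambda>t. J (\<mu> t)) has_derivative D) (at \<theta>) \<and>
             ((\<lambda>t. \<integral>x. \<Psi> (\<mu> \<theta>) x \<partial>\<mu> t) has_derivative D) (at \<theta>)"
proof -
  have "continuous_on UNIV (\<Psi> (\<mu> \<theta>))"
    by (rule continuous_influence_functions(2)[OF assms(2,3,4)])
  moreover have "bounded (range (\<Psi> (\<mu> \<theta>)))"
    using compact_continuous_image[OF calculation assms(1)] by (rule compact_imp_bounded)
  ultimately obtain D where D: "((\<lambda>t. \<integral>x. \<Psi> (\<mu> \<theta>) x \<partial>\<mu> t) has_derivative D) (at \<theta>)"
    using weakly_differentiable_at_has_derivative_integral[OF assms(5)] by blast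
  moreover from D have "((\<lambda>t. J (\<mu> t)) has_derivative D) (at \<theta>)"
    using influence_remainder_little_o[OF assms(1-4,5)] by (rule has_derivative_of_little_o_difference)
  ultimately show ?thesis by blast
qed

end
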